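(* There is an absolute constant $K>0$ such that the following holds. Let $\mathcal U$ be a finite set, $V'\subseteq\mathbb{R}^{\mathcal U}$ a linear subspace with orthogonal projector $\Pi_{V'}$, and $c>0$ such that there is a polynomial $S$ in the variables $(f(u))_{u\in\mathcal U}$ which is a sum of squares of polynomials, of degree at most $4$, with the polynomial identity $\|\Pi_{V'}f\|_4^4=c^4\|\Pi_{V'}f\|_2^4-S(f)$. Let $f_0\in\mathbb{R}^{\mathcal U}$ be orthogonal to $V'$ with $\|f_0\|_2=1$ and $\|f_0\|_4=C>100c$, and let $V=\mathrm{span}(V'\cup\{f_0\})$. Let $\tilde{\mathbb{E}}$ be a level-$\ell$ pseudoexpectation, $\ell\ge8$, over the variables $(f(u))_{u\in\mathcal U}$ such that: $\tilde{\mathbb{E}}[L(f)Q(f)]=0$ for every linear form $L$ vanishing on $V$ and every polynomial $Q$ of degree at most $\ell-1$; $\tilde{\mathbb{E}}[(\|f\|_2^2-1)Q(f)]=0$ for every polynomial $Q$ of degree at most $\ell-2$; and $\tilde{\mathbb{E}}\|f\|_4^4\ge C^4$. Then $\tilde{\mathbb{E}}\langle f,f_0\rangle^2\ge1-Kc/C$. (In particular this holds when $\tilde{\mathbb{E}}$ is the expectation of a probability distribution over unit-norm $f\in V$ with $\|f\|_4\ge C$.)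
   Context: Norms and inner products on $\mathbb{R}^{\mathcal U}$ use the uniform (expectation) measure: $\langle g,h\rangle=\mathbb{E}_{u}g(u)h(u)$, $\|g\|_p=(\mathbb{E}_u|g(u)|^p)^{1/p}$. A level-$\ell$ pseudoexpectation is a linear functional $\tilde{\mathbb{E}}$ on real polynomials of degree at most $\ell$ in the given variables such that $\tilde{\mathbb{E}}1=1$ and $\tilde{\mathbb{E}}P^2\ge0$ for every polynomial $P$ of degree at most $\ell/2$. *)

theory Defs
  imports "HOL-Analysis.Analysis"
begin

text \<open>The finite index set U is represented as a finite set of naturals (any finite set can be
relabelled this way); vectors in R^U are functions nat => real, of which only the values on U matter.
Norms and inner products use the uniform (expectation) measure on U.\<close>

definition ipU :: "nat set \<Rightarrow> (nat \<Rightarrow> real) \<Rightarrow> (nat \<Rightarrow> real) \<Rightarrow> real" where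
  "ipU U g h = (\<Sum>u\<in>U. g u * h u) / real (card U)"

definition norm2U :: "nat set \<Rightarrow> (nat \<Rightarrow> real) \<Rightarrow> real" where
  "norm2U U g = sqrt ((\<Sum>u\<in>U. (g u)^2) / real (card U))"

definition norm4U :: "nat set \<Rightarrow> (nat \<Rightarrow> real) \<Rightarrow> real" where
  "norm4U U g = root 4 ((\<Sum>u\<in>U. (g u)^4) / real (card U))"

definition RU :: "nat set \<Rightarrow> (nat \<Rightarrow> real) set" where
  "RU U = {g. \<forall>u. u \<notin> U \<longrightarrow> g u = 0}"

definition subspaceF :: "(nat \<Rightarrow> real) set \<Rightarrow> bool" where
  "subspaceF W \<longleftrightarrow> (\<lambda>u. 0) \<in> W \<and>
     (\<forall>g\<in>W. \<forall>h\<in>W. (\<lambda>u. g u + h u) \<in> W) \<and> (\<forall>t. \<forall>g\<in>W. (\<lambda>u. t * g u) \<in> W)"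

definition spanF :: "(nat \<Rightarrow> real) set \<Rightarrow> (nat \<Rightarrow> real) set" where
  "spanF S = {g. \<exists>A a. finite A \<and> A \<subseteq> S \<and> g = (\<lambda>u. \<Sum>v\<in>A. a v * v u)}"

definition projU :: "nat set \<Rightarrow> (nat \<Rightarrow> real) set \<Rightarrow> (nat \<Rightarrow> real) \<Rightarrow> (nat \<Rightarrow> real)" where
  "projU U W f = (THE g. g \<in> W \<and> (\<forall>w\<in>W. ipU U (\<lambda>u. f u - g u) w = 0))"

definition polyfun :: "nat set \<Rightarrow> nat \<Rightarrow> ((nat \<Rightarrow> real) \<Rightarrow> real) \<Rightarrow> bool" where
  "polyfun U d p \<longleftrightarrow> (\<exists>A (a :: (nat \<Rightarrow> nat) \<Rightarrow> real). finite A \<and>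
      (\<forall>\<alpha>\<in>A. (\<Sum>u\<in>U. \<alpha> u) \<le> d) \<and>
      p = (\<lambda>x. \<Sum>\<alpha>\<in>A. a \<alpha> * (\<Prod>u\<in>U. x u ^ \<alpha> u)))"

text \<open>Level-l pseudoexpectation: linear functional on polynomials of degree at most l
  (values on other functions are irrelevant), normalised, nonnegative on squares of
  polynomials of degree at most l/2.\<close>
definition pseudoexp :: "nat set \<Rightarrow> nat \<Rightarrow> (((nat \<Rightarrow> real) \<Rightarrow> real) \<Rightarrow> real) \<Rightarrow> bool" where
  "pseudoexp U l E \<longleftrightarrow>
     (\<forall>p q a b. polyfun U l p \<longrightarrow> polyfun U l q \<longrightarrow>
         E (\<lambda>x. a * p x + b * q x) = a * E p + b * E q) \<and>
     E (\<lambda>x. 1) = 1 \<and>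
     (\<forall>P. polyfun U (l div 2) P \<longrightarrow> E (\<lambda>x. (P x)^2) \<ge> 0)"

end

theory Submission
  imports Defs "HOL-Computational_Algebra.Polynomial"
begin

text \<open>
  Write \<open>t = \<langle>f, f0\<rangle>\<close> and \<open>g = \<Pi> f + t f0\<close>, the projection of \<open>f\<close> onto \<open>V\<close>, where \<open>\<Pi>\<close>
  projects onto \<open>V'\<close>. Every coordinate of \<open>f - g\<close> is a linear form vanishing on \<open>V\<close>, so
  the pseudoexpectation cannot tell \<open>f\<close> from \<open>g\<close> in polynomials of degree at most \<open>l\<close>:
  \<open>E \<parallel>f\<parallel>\<^sub>4\<^sup>4 = E \<parallel>g\<parallel>\<^sub>4\<^sup>4\<close>, and the constraint \<open>\<parallel>f\<parallel>\<^sub>2\<^sup>2 = 1\<close> becomes \<open>\<parallel>\<Pi> f\<parallel>\<^sub>2\<^sup>2 + t\<^sup>2 = 1\<close>.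
  The inequality \<open>(x + y)\<^sup>4 \<le> (1 + e)\<^sup>3 x\<^sup>4 + (1 + 1/e)\<^sup>3 y\<^sup>4\<close> with \<open>e = C/c\<close> has a
  sum-of-squares certificate; together with the certified hypercontractivity of \<open>V'\<close> and the
  constraint it gives \<open>C\<^sup>4 \<le> E \<parallel>g\<parallel>\<^sub>4\<^sup>4 \<le> (c + C)\<^sup>3 (c (1 - E t\<^sup>2) + C E t\<^sup>2)\<close>, which forces
  \<open>E t\<^sup>2 \<ge> 1 - 10 c / C\<close> when \<open>C > 100 c\<close>. The squares in the certificate for \<open>V'\<close> have
  degree at most 2 (along rays a real sum of squares has no cancelling leading terms), so the
  pseudoexpectation is nonnegative on them.
\<close>

section \<open>Polynomial functions and sums of squares\<close>

definition monomial_fun :: "nat set \<Rightarrow> (nat \<Rightarrow> nat) \<Rightarrow> (nat \<Rightarrow> real) \<Rightarrow> real" where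
  "monomial_fun U \<alpha> x = (\<Prod>u\<in>U. x u ^ \<alpha> u)"

lemma polyfun_iff:
  "polyfun U d p \<longleftrightarrow> (\<exists>A a. finite A \<and> (\<forall>\<alpha>\<in>A. sum \<alpha> U \<le> d) \<and>
     p = (\<lambda>x. \<Sum>\<alpha>\<in>A. a \<alpha> * monomial_fun U \<alpha> x))"
  by (simp add: polyfun_def monomial_fun_def)

lemma polyfun_mono: "polyfun U d p \<Longrightarrow> d \<le> d' \<Longrightarrow> polyfun U d' p"
  unfolding polyfun_iff by (metis order_trans)

lemma polyfun_const: "polyfun U d (\<lambda>x. c)"
  unfolding polyfun_iff
  by (rule exI[of _ "{\<lambda>_. 0}"], rule exI[of _ "\<lambda>_. c"]) (simp add: monomial_fun_def)

lemma polyfun_coordinate: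
  assumes "finite U" "u \<in> U"
  shows "polyfun U 1 (\<lambda>x. x u)"
proof -
  define e where "e = (\<lambda>v::nat. if v = u then 1 else (0::nat))"
  have "sum e U = 1" using assms unfolding e_def by simp
  moreover have "monomial_fun U e x = x u" for x
  proof -
    have "monomial_fun U e x = (\<Prod>v\<in>U. if v = u then x u else 1)"
      unfolding monomial_fun_def e_def by (rule prod.cong) auto
    then show ?thesis using assms by simp
  qed
  ultimately show ?thesis unfolding polyfun_iff
    by (intro exI[of _ "{e}"] exI[of _ "\<lambda>_. 1"]) auto
qed

lemma sum_union_padded:
  fixes f g :: "'a \<Rightarrow> 'b::comm_monoid_add"
  assumes "finite A" "finite B"
  shows "(\<Sum>x\<in>A \<union> B. (if x \<in> A then f x else 0) + (if x \<in> B then g x else 0)) = sum f A + sum g B"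
  using assms by (simp add: sum.distrib flip: sum.inter_restrict)

lemma polyfun_lincomb:
  assumes "polyfun U d p" "polyfun U d q"
  shows "polyfun U d (\<lambda>x. a * p x + b * q x)"
proof -
  obtain A ca where A: "finite A" "\<forall>\<alpha>\<in>A. sum \<alpha> U \<le> d"
    "p = (\<lambda>x. \<Sum>\<alpha>\<in>A. ca \<alpha> * monomial_fun U \<alpha> x)"
    using assms(1) unfolding polyfun_iff by blast
  obtain B cb where B: "finite B" "\<forall>\<alpha>\<in>B. sum \<alpha> U \<le> d"
    "q = (\<lambda>x. \<Sum>\<alpha>\<in>B. cb \<alpha> * monomial_fun U \<alpha> x)"
    using assms(2) unfolding polyfun_iff by blast
  define cab where "cab \<gamma> = (if \<gamma> \<in> A then a * ca \<gamma> else 0) + (if \<gamma> \<in> B then b * cb \<gamma> else 0)"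
    for \<gamma>
  have "cab \<gamma> * m = (if \<gamma> \<in> A then a * ca \<gamma> * m else 0) + (if \<gamma> \<in> B then b * cb \<gamma> * m else 0)"
    for \<gamma> m
    by (simp add: cab_def distrib_right)
  then have "(\<Sum>\<gamma>\<in>A \<union> B. cab \<gamma> * monomial_fun U \<gamma> x) = a * p x + b * q x" for x
    unfolding A(3) B(3) by (simp add: sum_union_padded[OF A(1) B(1)] sum_distrib_left mult.assoc)
  then show ?thesis unfolding polyfun_iff
    by (intro exI[of _ "A \<union> B"] exI[of _ cab]) (use A B in auto)
qed

lemma polyfun_add: "polyfun U d p \<Longrightarrow> polyfun U d q \<Longrightarrow> polyfun U d (\<lambda>x. p x + q x)"
  using polyfun_lincomb[of U d p q 1 1] by simp

lemma polyfun_diff: "polyfun U d p \<Longrightarrow> polyfun U d q \<Longrightarrow> polyfun U d (\<lambda>x. p x - q x)"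
  using polyfun_lincomb[of U d p q 1 "-1"] by simp

lemma polyfun_cmult: "polyfun U d p \<Longrightarrow> polyfun U d (\<lambda>x. a * p x)"
  using polyfun_lincomb[of U d p p a 0] by simp

lemma polyfun_sum:
  "finite I \<Longrightarrow> (\<And>i. i \<in> I \<Longrightarrow> polyfun U d (F i)) \<Longrightarrow> polyfun U d (\<lambda>x. \<Sum>i\<in>I. F i x)"
  by (induction I rule: finite_induct) (simp_all add: polyfun_const polyfun_add)

lemma polyfun_sum_list:
  "(\<And>F. F \<in> set Fs \<Longrightarrow> polyfun U d F) \<Longrightarrow> polyfun U d (\<lambda>x. \<Sum>F\<leftarrow>Fs. F x)"
  by (induction Fs) (simp_all add: polyfun_const polyfun_add)

lemma polyfun_linear_form: "finite U \<Longrightarrow> polyfun U 1 (\<lambda>x. \<Sum>v\<in>U. a v * x v)"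
  by (intro polyfun_sum polyfun_cmult polyfun_coordinate)

lemma polyfun_mult:
  assumes "polyfun U d1 p" "polyfun U d2 q"
  shows "polyfun U (d1 + d2) (\<lambda>x. p x * q x)"
proof -
  obtain A ca where A: "finite A" "\<forall>\<alpha>\<in>A. sum \<alpha> U \<le> d1"
    "p = (\<lambda>x. \<Sum>\<alpha>\<in>A. ca \<alpha> * monomial_fun U \<alpha> x)"
    using assms(1) unfolding polyfun_iff by blast
  obtain B cb where B: "finite B" "\<forall>\<alpha>\<in>B. sum \<alpha> U \<le> d2"
    "q = (\<lambda>x. \<Sum>\<alpha>\<in>B. cb \<alpha> * monomial_fun U \<alpha> x)"
    using assms(2) unfolding polyfun_iff by blast
  define add_exp where "add_exp = (\<lambda>(\<alpha>::nat \<Rightarrow> nat, \<beta>). (\<lambda>u. \<alpha> u + \<beta> u))"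
  define G where "G = add_exp ` (A \<times> B)"
  define cG where "cG \<gamma> = (\<Sum>z\<in>{z\<in>A \<times> B. add_exp z = \<gamma>}. ca (fst z) * cb (snd z))" for \<gamma>
  have mon_add: "monomial_fun U (add_exp z) x = monomial_fun U (fst z) x * monomial_fun U (snd z) x"
    for z x
    unfolding monomial_fun_def add_exp_def by (cases z) (simp add: power_add prod.distrib)
  have "(\<Sum>\<gamma>\<in>G. cG \<gamma> * monomial_fun U \<gamma> x)
      = (\<Sum>z\<in>A \<times> B. ca (fst z) * cb (snd z) * monomial_fun U (add_exp z) x)" for x
    using sum.group[of "A \<times> B" G add_exp "\<lambda>z. ca (fst z) * cb (snd z) * monomial_fun U (add_exp z) x"]
      A(1) B(1)
    unfolding G_def cG_def by (simp add: sum_distrib_right)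
  also have "\<dots> x = p x * q x" for x
    unfolding A(3) B(3) mon_add
    by (simp add: sum_product sum.cartesian_product case_prod_beta mult_ac)
  finally have "(\<Sum>\<gamma>\<in>G. cG \<gamma> * monomial_fun U \<gamma> x) = p x * q x" for x .
  moreover have "\<forall>\<gamma>\<in>G. sum \<gamma> U \<le> d1 + d2"
    using A(2) B(2) unfolding G_def add_exp_def by (auto simp: sum.distrib intro: add_mono)
  ultimately show ?thesis unfolding polyfun_iff
    by (intro exI[of _ G] exI[of _ cG]) (use A(1) B(1) G_def in auto)
qed

lemma polyfun_mult_le:
  "polyfun U d1 p \<Longrightarrow> polyfun U d2 q \<Longrightarrow> d1 + d2 \<le> d \<Longrightarrow> polyfun U d (\<lambda>x. p x * q x)"
  using polyfun_mult polyfun_mono by blast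

lemma polyfun_power: "polyfun U d p \<Longrightarrow> polyfun U (n * d) (\<lambda>x. p x ^ n)"
proof (induction n)
  case 0
  show ?case using polyfun_const[of U 0 1] by simp
next
  case (Suc n)
  show ?case using polyfun_mult[OF Suc.prems Suc.IH[OF Suc.prems]] by simp
qed

lemma polyfun_power_le: "polyfun U d p \<Longrightarrow> n * d \<le> d' \<Longrightarrow> polyfun U d' (\<lambda>x. p x ^ n)"
  using polyfun_power polyfun_mono by blast

definition sos_polyfun :: "nat set \<Rightarrow> nat \<Rightarrow> ((nat \<Rightarrow> real) \<Rightarrow> real) \<Rightarrow> bool" where
  "sos_polyfun U d F \<longleftrightarrow> (\<exists>ps. (\<forall>p\<in>set ps. polyfun U d p) \<and> F = (\<lambda>x. \<Sum>p\<leftarrow>ps. (p x)^2))"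

lemma sos_polyfun_square: "polyfun U d p \<Longrightarrow> sos_polyfun U d (\<lambda>x. (p x)^2)"
  unfolding sos_polyfun_def by (intro exI[of _ "[p]"]) simp

lemma sos_polyfun_add:
  assumes "sos_polyfun U d F" "sos_polyfun U d G"
  shows "sos_polyfun U d (\<lambda>x. F x + G x)"
proof -
  obtain ps qs where "\<forall>p\<in>set ps. polyfun U d p" "F = (\<lambda>x. \<Sum>p\<leftarrow>ps. (p x)^2)"
    "\<forall>p\<in>set qs. polyfun U d p" "G = (\<lambda>x. \<Sum>p\<leftarrow>qs. (p x)^2)"
    using assms unfolding sos_polyfun_def by blast
  then show ?thesis unfolding sos_polyfun_def by (intro exI[of _ "ps @ qs"]) auto
qed

lemma sos_polyfun_cmult:
  assumes "k \<ge> 0" "sos_polyfun U d F"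
  shows "sos_polyfun U d (\<lambda>x. k * F x)"
proof -
  obtain ps where ps: "\<forall>p\<in>set ps. polyfun U d p" "F = (\<lambda>x. \<Sum>p\<leftarrow>ps. (p x)^2)"
    using assms(2) unfolding sos_polyfun_def by blast
  have "k * F x = (\<Sum>p\<leftarrow>map (\<lambda>p x. sqrt k * p x) ps. (p x)^2)" for x
    using assms(1) by (simp add: ps(2) o_def power_mult_distrib sum_list_const_mult)
  then show ?thesis unfolding sos_polyfun_def using ps(1)
    by (intro exI[of _ "map (\<lambda>p x. sqrt k * p x) ps"]) (auto intro: polyfun_cmult)
qed

lemma sos_polyfun_sum:
  "finite I \<Longrightarrow> (\<And>i. i \<in> I \<Longrightarrow> sos_polyfun U d (F i)) \<Longrightarrow> sos_polyfun U d (\<lambda>x. \<Sum>i\<in>I. F i x)"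
proof (induction I rule: finite_induct)
  case empty
  show ?case unfolding sos_polyfun_def by (intro exI[of _ "[]"]) simp
next
  case (insert i I)
  then show ?case using sos_polyfun_add[of U d "F i" "\<lambda>x. \<Sum>i\<in>I. F i x"] by simp
qed

lemma polyfun_sos_polyfun:
  assumes "sos_polyfun U d F"
  shows "polyfun U (2 * d) F"
proof -
  obtain ps where ps: "\<forall>p\<in>set ps. polyfun U d p" "F = (\<lambda>x. \<Sum>p\<leftarrow>ps. (p x)^2)"
    using assms unfolding sos_polyfun_def by blast
  have "polyfun U (2 * d) (\<lambda>x. \<Sum>G\<leftarrow>map (\<lambda>p x. (p x)^2) ps. G x)"
    using ps(1) by (intro polyfun_sum_list) (auto intro: polyfun_power)
  then show ?thesis unfolding ps(2) by (simp add: o_def)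
qed

lemma sos_polyfun_mono: "sos_polyfun U d F \<Longrightarrow> d \<le> d' \<Longrightarrow> sos_polyfun U d' F"
  unfolding sos_polyfun_def using polyfun_mono by blast

lemma lead_coeff_pos_add:
  fixes a b :: "real poly"
  assumes "a = 0 \<or> lead_coeff a > 0" "b = 0 \<or> lead_coeff b > 0"
  shows "(a + b = 0 \<or> lead_coeff (a + b) > 0) \<and> degree (a + b) = max (degree a) (degree b)"
proof (cases "a = 0 \<or> b = 0")
  case True
  then show ?thesis using assms by auto
next
  case False
  then have la: "lead_coeff a > 0" and lb: "lead_coeff b > 0" using assms by auto
  consider "degree a < degree b" | "degree b < degree a" | "degree a = degree b" by linarith
  then show ?thesis
  proof cases
    case 1
    then show ?thesis using lb by (simp add: degree_add_eq_right coeff_eq_0)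
  next
    case 2
    then show ?thesis using la by (simp add: degree_add_eq_left coeff_eq_0)
  next
    case 3
    have c: "coeff (a + b) (degree a) = lead_coeff a + lead_coeff b" using 3 by simp
    then have "degree a \<le> degree (a + b)" using la lb by (intro le_degree) simp
    moreover have "degree (a + b) \<le> degree a" using 3 by (intro degree_add_le) auto
    ultimately show ?thesis using c la lb 3 by simp
  qed
qed

lemma degree_sum_list_squares:
  fixes ps :: "real poly list"
  shows "((\<Sum>p\<leftarrow>ps. p * p) = 0 \<or> lead_coeff (\<Sum>p\<leftarrow>ps. p * p) > 0) \<and>
         (\<forall>p\<in>set ps. 2 * degree p \<le> degree (\<Sum>p\<leftarrow>ps. p * p))"
proof (induction ps)
  case Nil
  then show ?case by simp
next
  case (Cons p ps)
  have "p * p = 0 \<or> lead_coeff (p * p) > 0"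
  proof (cases "p = 0")
    case False
    then have "lead_coeff p \<noteq> 0" by simp
    then have "0 < lead_coeff p * lead_coeff p" using not_real_square_gt_zero by blast
    then show ?thesis by (simp add: lead_coeff_mult)
  qed simp
  moreover have "degree (p * p) = 2 * degree p"
    by (cases "p = 0") (auto simp: degree_mult_eq)
  ultimately show ?case using lead_coeff_pos_add[OF _ Cons.IH[THEN conjunct1], of "p * p"] Cons.IH
    by auto
qed

lemma polyfun_along_rays:
  assumes "polyfun U d q"
  shows "\<exists>\<Phi>. (\<forall>x r. poly (\<Phi> x) r = q (\<lambda>u. r * x u)) \<and> (\<forall>x. degree (\<Phi> x) \<le> d) \<and>
             ((\<forall>x. degree (\<Phi> x) \<le> k) \<longrightarrow> polyfun U k q)"
proof -
  obtain A a where A: "finite A" "\<forall>\<alpha>\<in>A. sum \<alpha> U \<le> d"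
    "q = (\<lambda>x. \<Sum>\<alpha>\<in>A. a \<alpha> * monomial_fun U \<alpha> x)"
    using assms unfolding polyfun_iff by blast
  define ray_poly where "ray_poly B x = (\<Sum>\<alpha>\<in>B. monom (a \<alpha> * monomial_fun U \<alpha> x) (sum \<alpha> U))" for B x
  define Ak where "Ak = {\<alpha>\<in>A. sum \<alpha> U \<le> k}"
  have poly_ray_poly: "poly (ray_poly B x) r = (\<Sum>\<alpha>\<in>B. a \<alpha> * monomial_fun U \<alpha> x * r ^ sum \<alpha> U)" for B x r
    unfolding ray_poly_def by (simp add: poly_sum poly_monom)
  have monomial_ray: "monomial_fun U \<alpha> (\<lambda>u. r * x u) = monomial_fun U \<alpha> x * r ^ sum \<alpha> U" for \<alpha> r x
    unfolding monomial_fun_def by (simp add: power_mult_distrib prod.distrib power_sum mult.commute)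
  have "polyfun U k q" if deg: "\<forall>x. degree (ray_poly A x) \<le> k"
  proof -
    have "ray_poly A x = ray_poly Ak x" for x
    proof (rule poly_eqI)
      fix j
      show "coeff (ray_poly A x) j = coeff (ray_poly Ak x) j"
      proof (cases "j \<le> k")
        case True
        then show ?thesis unfolding ray_poly_def coeff_sum coeff_monom Ak_def
          by (intro sum.mono_neutral_right A(1)) auto
      next
        case False
        then have "coeff (ray_poly A x) j = 0" using deg by (intro coeff_eq_0) (meson le_trans not_le)
        moreover have "coeff (ray_poly Ak x) j = 0" unfolding ray_poly_def coeff_sum coeff_monom Ak_def
          using False by (intro sum.neutral) auto
        ultimately show ?thesis by simp
      qed
    qed
    then have "q = (\<lambda>x. \<Sum>\<alpha>\<in>Ak. a \<alpha> * monomial_fun U \<alpha> x)"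
      using poly_ray_poly[of A _ 1] poly_ray_poly[of Ak _ 1] unfolding A(3) by simp
    then show ?thesis unfolding polyfun_iff
      by (intro exI[of _ Ak] exI[of _ a]) (use A(1) in \<open>auto simp: Ak_def\<close>)
  qed
  moreover have "degree (ray_poly A x) \<le> d" for x
    unfolding ray_poly_def
    by (intro degree_sum_le) (use A in \<open>auto intro: order_trans[OF degree_monom_le]\<close>)
  moreover have "poly (ray_poly A x) r = q (\<lambda>u. r * x u)" for x r
    unfolding poly_ray_poly A(3) monomial_ray by (simp add: mult_ac)
  ultimately show ?thesis by blast
qed

lemma polyfun_sum_squares_summands:
  assumes "\<forall>q\<in>set qs. \<exists>d. polyfun U d q" "polyfun U (2 * k) (\<lambda>f. \<Sum>q\<leftarrow>qs. (q f)^2)"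
  shows "sos_polyfun U k (\<lambda>f. \<Sum>q\<leftarrow>qs. (q f)^2)"
proof -
  obtain \<Phi> where \<Phi>: "\<And>q x r. q \<in> set qs \<Longrightarrow> poly (\<Phi> q x) r = q (\<lambda>u. r * x u)"
    "\<And>q. q \<in> set qs \<Longrightarrow> (\<forall>x. degree (\<Phi> q x) \<le> k) \<Longrightarrow> polyfun U k q"
    using bchoice[of "set qs" "\<lambda>q \<Phi>. (\<forall>x r. poly (\<Phi> x) r = q (\<lambda>u. r * x u)) \<and>
        ((\<forall>x. degree (\<Phi> x) \<le> k) \<longrightarrow> polyfun U k q)"] assms(1) polyfun_along_rays
    by metis
  obtain \<Psi> where \<Psi>: "\<And>x r. poly (\<Psi> x) r = (\<Sum>q\<leftarrow>qs. (q (\<lambda>u. r * x u))^2)" "\<And>x. degree (\<Psi> x) \<le> 2 * k"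
    using polyfun_along_rays[OF assms(2)] by blast
  have "polyfun U k q" if q: "q \<in> set qs" for q
  proof (rule \<Phi>(2)[OF q], rule allI)
    fix x
    have "poly (\<Sum>p\<leftarrow>map (\<lambda>q. \<Phi> q x) qs. p * p) r = (\<Sum>q\<leftarrow>qs. (poly (\<Phi> q x) r)^2)" for r
      by (induction qs) (simp_all add: power2_eq_square)
    also have "(\<Sum>q\<leftarrow>qs. (poly (\<Phi> q x) r)^2) = poly (\<Psi> x) r" for r
      unfolding \<Psi>(1) by (rule arg_cong[of _ _ sum_list], rule map_cong) (simp_all add: \<Phi>(1))
    finally have "poly (\<Sum>p\<leftarrow>map (\<lambda>q. \<Phi> q x) qs. p * p) = poly (\<Psi> x)" ..
    then have "(\<Sum>p\<leftarrow>map (\<lambda>q. \<Phi> q x) qs. p * p) = \<Psi> x" by (rule poly_eq_poly_eq_iff[THEN iffD1])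
    then have "2 * degree (\<Phi> q x) \<le> degree (\<Psi> x)"
      using degree_sum_list_squares[of "map (\<lambda>q. \<Phi> q x) qs"] q by auto
    then show "degree (\<Phi> q x) \<le> k" using \<Psi>(2)[of x] by linarith
  qed
  then show ?thesis unfolding sos_polyfun_def by blast
qed

section \<open>Pseudoexpectations\<close>

locale pseudoexpectation =
  fixes U :: "nat set" and l :: nat and E :: "((nat \<Rightarrow> real) \<Rightarrow> real) \<Rightarrow> real"
  assumes pseudoexp: "pseudoexp U l E"
begin

lemma E_lincomb:
  "polyfun U l p \<Longrightarrow> polyfun U l q \<Longrightarrow> E (\<lambda>x. a * p x + b * q x) = a * E p + b * E q"
  using pseudoexp unfolding pseudoexp_def by blast

lemma E_const: "E (\<lambda>x. c) = c"
proof -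
  have "E (\<lambda>x. c * 1 + 0 * 1) = c * E (\<lambda>x. 1) + 0 * E (\<lambda>x. 1)"
    by (intro E_lincomb polyfun_const)
  moreover have "E (\<lambda>x. 1) = 1" using pseudoexp unfolding pseudoexp_def by blast
  ultimately show ?thesis by simp
qed

lemma E_add: "polyfun U l p \<Longrightarrow> polyfun U l q \<Longrightarrow> E (\<lambda>x. p x + q x) = E p + E q"
  using E_lincomb[of p q 1 1] by simp

lemma E_sum:
  "finite I \<Longrightarrow> (\<And>i. i \<in> I \<Longrightarrow> polyfun U l (F i)) \<Longrightarrow> E (\<lambda>x. \<Sum>i\<in>I. F i x) = (\<Sum>i\<in>I. E (F i))"
proof (induction I rule: finite_induct)
  case empty
  then show ?case using E_const[of 0] by simp
next
  case (insert i I)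
  then have "E (\<lambda>x. F i x + (\<Sum>i\<in>I. F i x)) = E (F i) + E (\<lambda>x. \<Sum>i\<in>I. F i x)"
    by (intro E_add[of "F i", simplified] polyfun_sum) auto
  with insert show ?case by simp
qed

lemma E_sum_list:
  "(\<And>F. F \<in> set Fs \<Longrightarrow> polyfun U l F) \<Longrightarrow> E (\<lambda>x. \<Sum>F\<leftarrow>Fs. F x) = (\<Sum>F\<leftarrow>Fs. E F)"
proof (induction Fs)
  case Nil
  then show ?case using E_const[of 0] by simp
next
  case (Cons F Fs)
  then have "E (\<lambda>x. F x + (\<Sum>F\<leftarrow>Fs. F x)) = E F + E (\<lambda>x. \<Sum>F\<leftarrow>Fs. F x)"
    by (intro E_add[of F, simplified] polyfun_sum_list) auto
  with Cons show ?case by simp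
qed

lemma E_sos_nonneg:
  assumes "sos_polyfun U (l div 2) F"
  shows "E F \<ge> 0"
proof -
  obtain ps where ps: "\<forall>p\<in>set ps. polyfun U (l div 2) p" "F = (\<lambda>x. \<Sum>p\<leftarrow>ps. (p x)^2)"
    using assms unfolding sos_polyfun_def by blast
  have deg: "polyfun U l (\<lambda>x. (p x)^2)" if "p \<in> set ps" for p
    using ps(1) that by (intro polyfun_power_le[of U "l div 2"]) auto
  have "E F = (\<Sum>G\<leftarrow>map (\<lambda>p x. (p x)^2) ps. E G)"
    unfolding ps(2) using E_sum_list[of "map (\<lambda>p x. (p x)^2) ps"] deg by (auto simp: o_def)
  also have "\<dots> \<ge> 0"
    using pseudoexp ps(1) unfolding pseudoexp_def by (auto intro!: sum_list_nonneg)
  finally show ?thesis .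
qed

end

section \<open>Inner products, spans and orthogonal projections\<close>

lemma ipU_lincomb_left: "ipU U (\<lambda>u. a * g u + b * h u) w = a * ipU U g w + b * ipU U h w"
  unfolding ipU_def by (simp add: algebra_simps sum.distrib sum_distrib_left add_divide_distrib)

lemma ipU_diff_left: "ipU U (\<lambda>u. g u - h u) w = ipU U g w - ipU U h w"
  using ipU_lincomb_left[of U 1 g "-1" h w] by simp

lemma ipU_commute: "ipU U g h = ipU U h g"
  unfolding ipU_def by (simp add: mult.commute)

lemma ipU_sum_left: "ipU U (\<lambda>u. \<Sum>i\<in>I. c i * G i u) w = (\<Sum>i\<in>I. c i * ipU U (G i) w)"
  unfolding ipU_def
  by (simp add: sum_distrib_left sum_distrib_right sum_divide_distrib mult_ac sum.swap[of _ U])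

lemma ipU_self_eq_0:
  assumes "finite U" "ipU U g g = 0" "u \<in> U"
  shows "g u = 0"
proof -
  have "card U > 0" using assms(1,3) card_gt_0_iff by blast
  then have "(\<Sum>u\<in>U. g u * g u) = 0" using assms(2) unfolding ipU_def by simp
  then show ?thesis using sum_nonneg_eq_0_iff[of U "\<lambda>u. g u * g u"] assms(1,3) by simp
qed

lemma subspaceF_zero: "subspaceF W \<Longrightarrow> (\<lambda>u. 0) \<in> W"
  unfolding subspaceF_def by blast

lemma subspaceF_add: "subspaceF W \<Longrightarrow> g \<in> W \<Longrightarrow> h \<in> W \<Longrightarrow> (\<lambda>u. g u + h u) \<in> W"
  unfolding subspaceF_def by blast

lemma subspaceF_cmult: "subspaceF W \<Longrightarrow> g \<in> W \<Longrightarrow> (\<lambda>u. t * g u) \<in> W"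
  unfolding subspaceF_def by blast

lemma subspaceF_lincomb:
  assumes "subspaceF W" "g \<in> W" "h \<in> W"
  shows "(\<lambda>u. a * g u + b * h u) \<in> W"
  using assms by (intro subspaceF_add subspaceF_cmult)

lemma subspaceF_sum:
  assumes "subspaceF W" "finite I" "\<And>i. i \<in> I \<Longrightarrow> G i \<in> W"
  shows "(\<lambda>u. \<Sum>i\<in>I. c i * G i u) \<in> W"
  using assms(2,3)
proof (induction I rule: finite_induct)
  case empty
  then show ?case using subspaceF_zero[OF assms(1)] by simp
next
  case (insert i I)
  then show ?case using subspaceF_lincomb[OF assms(1), of "G i" "\<lambda>u. \<Sum>i\<in>I. c i * G i u" "c i" 1]
    by simp
qed

lemma subspaceF_Int: "subspaceF W \<Longrightarrow> subspaceF W' \<Longrightarrow> subspaceF (W \<inter> W')"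
  unfolding subspaceF_def by blast

lemma subspaceF_kernel: "subspaceF {w. (\<Sum>u\<in>U. a u * w u) = 0}"
  unfolding subspaceF_def by (simp add: algebra_simps sum.distrib flip: sum_distrib_left)

lemma subspaceF_vanishing_at: "subspaceF {w. w u = 0}"
  unfolding subspaceF_def by simp

lemma spanF_add:
  assumes "g \<in> spanF S" "h \<in> spanF S"
  shows "(\<lambda>u. g u + h u) \<in> spanF S"
proof -
  obtain A a B b where A: "finite A" "A \<subseteq> S" "g = (\<lambda>u. \<Sum>v\<in>A. a v * v u)"
    and B: "finite B" "B \<subseteq> S" "h = (\<lambda>u. \<Sum>v\<in>B. b v * v u)"
    using assms unfolding spanF_def by blast
  define c where "c v = (if v \<in> A then a v else 0) + (if v \<in> B then b v else 0)" for v
  have "c v * v u = (if v \<in> A then a v * v u else 0) + (if v \<in> B then b v * v u else 0)" for v u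
    by (simp add: c_def distrib_right)
  then have "(\<lambda>u. g u + h u) = (\<lambda>u. \<Sum>v\<in>A \<union> B. c v * v u)"
    unfolding A(3) B(3) by (simp add: sum_union_padded[OF A(1) B(1)])
  then show ?thesis unfolding spanF_def using A(1,2) B(1,2)
    by (intro CollectI exI[of _ "A \<union> B"] exI[of _ c]) simp
qed

lemma spanF_cmult:
  assumes "g \<in> spanF S"
  shows "(\<lambda>u. t * g u) \<in> spanF S"
proof -
  obtain A a where A: "finite A" "A \<subseteq> S" "g = (\<lambda>u. \<Sum>v\<in>A. a v * v u)"
    using assms unfolding spanF_def by blast
  then have "(\<lambda>u. t * g u) = (\<lambda>u. \<Sum>v\<in>A. (t * a v) * v u)"
    by (simp add: sum_distrib_left mult.assoc)
  then show ?thesis unfolding spanF_def using A(1,2)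
    by (intro CollectI exI[of _ A] exI[of _ "\<lambda>v. t * a v"]) simp
qed

lemma subspaceF_spanF: "subspaceF (spanF S)"
proof -
  have "(\<lambda>u. 0) \<in> spanF S"
    unfolding spanF_def by (intro CollectI exI[of _ "{}"]) simp
  then show ?thesis unfolding subspaceF_def using spanF_add spanF_cmult by blast
qed

lemma spanF_superset: "x \<in> S \<Longrightarrow> x \<in> spanF S"
  unfolding spanF_def by (intro CollectI exI[of _ "{x}"] exI[of _ "\<lambda>_. 1"]) simp

lemma spanF_minimal:
  assumes "subspaceF W" "S \<subseteq> W"
  shows "spanF S \<subseteq> W"
proof
  fix g assume "g \<in> spanF S"
  then obtain A a where "finite A" "A \<subseteq> S" "g = (\<lambda>u. \<Sum>v\<in>A. a v * v u)"
    unfolding spanF_def by blast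
  then show "g \<in> W" using subspaceF_sum[OF assms(1), of A id a] assms(2) by auto
qed

lemma spanF_mono: "S \<subseteq> T \<Longrightarrow> spanF S \<subseteq> spanF T"
  using spanF_minimal[OF subspaceF_spanF] spanF_superset by blast

lemma linear_form_vanishes_on_spanF:
  "(\<And>x. x \<in> S \<Longrightarrow> (\<Sum>u\<in>U. a u * x u) = 0) \<Longrightarrow> w \<in> spanF S \<Longrightarrow> (\<Sum>u\<in>U. a u * w u) = 0"
  using spanF_minimal[OF subspaceF_kernel[where U = U and a = a], of S] by blast

lemma ipU_vanishes_on_spanF:
  assumes "\<And>x. x \<in> S \<Longrightarrow> ipU U r x = 0" "w \<in> spanF S"
  shows "ipU U r w = 0"
proof (cases "card U = 0")
  case False
  then have "(\<Sum>u\<in>U. r u * x u) = 0" if "x \<in> S" for x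
    using assms(1)[OF that] by (simp add: ipU_def)
  then show ?thesis using linear_form_vanishes_on_spanF[OF _ assms(2)] by (simp add: ipU_def)
qed (simp add: ipU_def)

lemma subspaceF_finitely_spanned:
  assumes "finite U" "W \<subseteq> RU U" "subspaceF W"
  shows "\<exists>B. finite B \<and> B \<subseteq> W \<and> W \<subseteq> spanF B"
  using assms
proof (induction U arbitrary: W rule: finite_induct)
  case empty
  then have "W \<subseteq> {\<lambda>u. 0}" by (auto simp: RU_def)
  then show ?case
    using subspaceF_zero[OF subspaceF_spanF, of "{}"] by (intro exI[of _ "{}"]) auto
next
  case (insert u U)
  define W0 where "W0 = W \<inter> {w. w u = 0}"
  have "W0 \<subseteq> RU U" using insert.prems(1) unfolding W0_def RU_def by auto
  moreover have "subspaceF W0" unfolding W0_def by (intro subspaceF_Int insert.prems(2) subspaceF_vanishing_at)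
  ultimately obtain B0 where B0: "finite B0" "B0 \<subseteq> W0" "W0 \<subseteq> spanF B0" using insert.IH[of W0] by blast
  show ?case
  proof (cases "\<exists>w\<in>W. w u \<noteq> 0")
    case False
    then have "W \<subseteq> W0" unfolding W0_def by auto
    then show ?thesis using B0 unfolding W0_def by blast
  next
    case True
    then obtain w1 where w1: "w1 \<in> W" "w1 u \<noteq> 0" by blast
    define e where "e = (\<lambda>v. w1 v / w1 u)"
    have eW: "e \<in> W" using subspaceF_cmult[OF insert.prems(2) w1(1), of "1 / w1 u"] by (simp add: e_def)
    have "w \<in> spanF (insert e B0)" if w: "w \<in> W" for w
    proof -
      define w0 where "w0 v = 1 * w v + (- w u) * e v" for v
      have "w0 \<in> W" unfolding w0_def by (rule subspaceF_lincomb[OF insert.prems(2) w eW])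
      moreover have "w0 u = 0" using w1(2) by (simp add: w0_def e_def)
      ultimately have "w0 \<in> W0" unfolding W0_def by simp
      then have "w0 \<in> spanF (insert e B0)"
        using B0(3) spanF_mono[of B0 "insert e B0"] by auto
      moreover have "e \<in> spanF (insert e B0)" by (simp add: spanF_superset)
      ultimately have "(\<lambda>v. 1 * w0 v + w u * e v) \<in> spanF (insert e B0)"
        by (rule subspaceF_lincomb[OF subspaceF_spanF])
      then show ?thesis by (simp add: w0_def)
    qed
    moreover have "insert e B0 \<subseteq> W" using eW B0(2) unfolding W0_def by auto
    ultimately show ?thesis using B0(1) by blast
  qed
qed

text \<open>Gram--Schmidt: orthogonalise the new vector \<open>b\<close> against the span of \<open>B\<close> and correct the
  residual of \<open>f\<close> along it.\<close>
lemma orthogonal_projection_spanF_exists: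
  assumes "finite U" "finite B"
  shows "\<exists>g\<in>spanF B. \<forall>b\<in>B. ipU U (\<lambda>u. f u - g u) b = 0"
  using assms(2)
proof (induction B arbitrary: f rule: finite_induct)
  case empty
  show ?case using subspaceF_zero[OF subspaceF_spanF] by blast
next
  case (insert b B)
  have span_insert: "spanF B \<subseteq> spanF (insert b B)" by (rule spanF_mono) auto
  obtain gf where gf: "gf \<in> spanF B" "\<forall>x\<in>B. ipU U (\<lambda>u. f u - gf u) x = 0"
    using insert.IH by blast
  obtain gb where gb: "gb \<in> spanF B" "\<forall>x\<in>B. ipU U (\<lambda>u. b u - gb u) x = 0"
    using insert.IH by blast
  define r where "r = (\<lambda>u. f u - gf u)"
  define b' where "b' = (\<lambda>u. 1 * b u + (- 1) * gb u)"
  define t where "t = ipU U r b' / ipU U b' b'"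
  define g where "g = (\<lambda>u. 1 * gf u + t * b' u)"
  have "b' \<in> spanF (insert b B)"
    unfolding b'_def using gb(1) span_insert
    by (intro subspaceF_lincomb subspaceF_spanF) (auto simp: spanF_superset)
  then have "g \<in> spanF (insert b B)"
    unfolding g_def using gf(1) span_insert by (intro subspaceF_lincomb subspaceF_spanF) auto
  have residual: "(\<lambda>u. f u - g u) = (\<lambda>u. 1 * r u + (- t) * b' u)"
    unfolding g_def r_def by auto
  have orth_B: "ipU U (\<lambda>u. f u - g u) x = 0" if "x \<in> B" for x
    unfolding residual ipU_lincomb_left using that gf(2) gb(2) by (simp add: r_def b'_def)
  have "ipU U (\<lambda>u. f u - g u) b' = 0"
  proof (cases "ipU U b' b' = 0")
    case True
    then show ?thesis using ipU_self_eq_0[OF assms(1) True] by (simp add: ipU_def)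
  next
    case False
    then show ?thesis unfolding residual ipU_lincomb_left t_def by simp
  qed
  moreover have "ipU U (\<lambda>u. f u - g u) gb = 0"
    using ipU_vanishes_on_spanF[OF orth_B gb(1)] by simp
  ultimately have "ipU U (\<lambda>u. f u - g u) b = 0"
    using ipU_lincomb_left[of U 1 b' 1 gb "\<lambda>u. f u - g u"] ipU_commute[of U _ "\<lambda>u. f u - g u"]
    by (simp add: b'_def)
  then show ?case using \<open>g \<in> spanF (insert b B)\<close> orth_B by blast
qed

locale RU_subspace =
  fixes U :: "nat set" and V :: "(nat \<Rightarrow> real) set"
  assumes finite_U: "finite U" and subset_RU: "V \<subseteq> RU U" and subspace: "subspaceF V"
begin

lemma orthogonal_projection_exists: "\<exists>g\<in>V. \<forall>w\<in>V. ipU U (\<lambda>u. f u - g u) w = 0"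
proof -
  obtain B where B: "finite B" "B \<subseteq> V" "V \<subseteq> spanF B"
    using subspaceF_finitely_spanned[OF finite_U subset_RU subspace] by blast
  obtain g where g: "g \<in> spanF B" "\<forall>b\<in>B. ipU U (\<lambda>u. f u - g u) b = 0"
    using orthogonal_projection_spanF_exists[OF finite_U B(1)] by blast
  have "g \<in> V" using g(1) spanF_minimal[OF subspace B(2)] by blast
  moreover have "ipU U (\<lambda>u. f u - g u) w = 0" if "w \<in> V" for w
    using ipU_vanishes_on_spanF[of B] g(2) B(3) that by blast
  ultimately show ?thesis by blast
qed

lemma orthogonal_projection_unique:
  assumes "g1 \<in> V" "\<forall>w\<in>V. ipU U (\<lambda>u. f u - g1 u) w = 0"
    and "g2 \<in> V" "\<forall>w\<in>V. ipU U (\<lambda>u. f u - g2 u) w = 0"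
  shows "g1 = g2"
proof
  fix u
  define d where "d = (\<lambda>u. 1 * g1 u + (-1) * g2 u)"
  have "d \<in> V" unfolding d_def using assms(1,3) by (rule subspaceF_lincomb[OF subspace])
  then have "ipU U (\<lambda>u. 1 * (f u - g2 u) + (-1) * (f u - g1 u)) d = 0"
    unfolding ipU_lincomb_left using assms(2,4) by simp
  moreover have "(\<lambda>u. 1 * (f u - g2 u) + (-1) * (f u - g1 u)) = d"
    unfolding d_def by auto
  ultimately have "ipU U d d = 0" by simp
  moreover have "g1 u = 0 \<and> g2 u = 0" if "u \<notin> U"
    using assms(1,3) subset_RU that unfolding RU_def by blast
  ultimately show "g1 u = g2 u"
    using ipU_self_eq_0[OF finite_U, of d u] by (cases "u \<in> U") (auto simp: d_def)
qed

lemma projU_orthogonal: "projU U V f \<in> V \<and> (\<forall>w\<in>V. ipU U (\<lambda>u. f u - projU U V f u) w = 0)"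
proof -
  have "\<exists>!g. g \<in> V \<and> (\<forall>w\<in>V. ipU U (\<lambda>u. f u - g u) w = 0)"
    using orthogonal_projection_exists orthogonal_projection_unique by blast
  then show ?thesis unfolding projU_def by (rule theI')
qed

lemma projU_eqI: "g \<in> V \<Longrightarrow> \<forall>w\<in>V. ipU U (\<lambda>u. f u - g u) w = 0 \<Longrightarrow> projU U V f = g"
  using projU_orthogonal orthogonal_projection_unique by blast

lemma projU_id: "w \<in> V \<Longrightarrow> projU U V w = w"
  by (rule projU_eqI) (auto simp: ipU_def)

lemma projU_eq_0: "\<forall>w\<in>V. ipU U f w = 0 \<Longrightarrow> projU U V f = (\<lambda>u. 0)"
  by (rule projU_eqI) (simp_all add: subspaceF_zero[OF subspace])

lemma projU_matrix:
  "projU U V f u = (\<Sum>v\<in>U. projU U V (\<lambda>w. if w = v then 1 else 0) u * f v)"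
proof -
  let ?\<delta> = "\<lambda>v w. if w = v then (1::real) else 0"
  have "projU U V f = (\<lambda>u. \<Sum>v\<in>U. f v * projU U V (?\<delta> v) u)"
  proof (rule projU_eqI)
    show "(\<lambda>u. \<Sum>v\<in>U. f v * projU U V (?\<delta> v) u) \<in> V"
      using subspaceF_sum[OF subspace finite_U, of "\<lambda>v. projU U V (?\<delta> v)" f] projU_orthogonal
      by blast
    show "\<forall>w\<in>V. ipU U (\<lambda>u. f u - (\<Sum>v\<in>U. f v * projU U V (?\<delta> v) u)) w = 0"
    proof
      fix w assume w: "w \<in> V"
      have "ipU U (projU U V (?\<delta> v)) w = w v / real (card U)" if "v \<in> U" for v
      proof -
        have "(\<Sum>u\<in>U. ?\<delta> v u * w u) = (\<Sum>u\<in>U. if u = v then w v else 0)"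
          by (rule sum.cong) auto
        then have "ipU U (?\<delta> v) w = w v / real (card U)" using finite_U that by (simp add: ipU_def)
        then show ?thesis using projU_orthogonal[of "?\<delta> v"] w by (simp add: ipU_diff_left)
      qed
      then have "(\<Sum>v\<in>U. f v * ipU U (projU U V (?\<delta> v)) w) = ipU U f w"
        by (simp add: ipU_def sum_divide_distrib)
      then show "ipU U (\<lambda>u. f u - (\<Sum>v\<in>U. f v * projU U V (?\<delta> v) u)) w = 0"
        unfolding ipU_diff_left ipU_sum_left by simp
    qed
  qed
  then show ?thesis by (simp add: mult.commute)
qed

end

lemma norm4U_power4: "(norm4U U h)^4 = (\<Sum>u\<in>U. (h u)^4) / real (card U)"
proof -
  have "(\<Sum>u\<in>U. (h u)^4) / real (card U) \<ge> 0" by (intro divide_nonneg_nonneg sum_nonneg) auto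
  then show ?thesis unfolding norm4U_def by (simp add: real_root_pow_pos2)
qed

lemma norm2U_power2: "(norm2U U h)^2 = (\<Sum>u\<in>U. (h u)^2) / real (card U)"
  unfolding norm2U_def by (simp add: sum_nonneg)

lemma polyfun_norm4U_power4:
  "(\<And>u. u \<in> U \<Longrightarrow> polyfun U 1 (\<lambda>f. x f u)) \<Longrightarrow> finite U \<Longrightarrow> polyfun U 4 (\<lambda>f. (norm4U U (x f))^4)"
  unfolding norm4U_power4 divide_inverse
  by (subst mult.commute) (intro polyfun_cmult polyfun_sum polyfun_power_le[of U 1]; simp)

lemma polyfun_norm2U_power2:
  "(\<And>u. u \<in> U \<Longrightarrow> polyfun U 1 (\<lambda>f. x f u)) \<Longrightarrow> finite U \<Longrightarrow> polyfun U 2 (\<lambda>f. (norm2U U (x f))^2)"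
  unfolding norm2U_power2 divide_inverse
  by (subst mult.commute) (intro polyfun_cmult polyfun_sum polyfun_power_le[of U 1]; simp)

section \<open>The correlation bound\<close>

lemma power4_add_sos:
  fixes e x y :: real
  assumes "e > 0"
  shows "(1 + e)^3 * x^4 + (1 + 1/e)^3 * y^4 - (x + y)^4
    = (1 + e)^2 / e * (e * x^2 - (1 / e) * y^2)^2 + 1 / e^2 * ((e * x - y)^2)^2 + 2 / e * ((x + y) * (e * x - y))^2"
  using assms by (simp add: field_simps) algebra

lemma correlation_from_fourth_moment:
  fixes c C T :: real
  assumes "0 < c" "100 * c < C" "C^4 \<le> (c + C)^3 * (c * (1 - T) + C * T)"
  shows "T \<ge> 1 - 10 * c / C"
proof (rule ccontr)
  assume neg: "\<not> T \<ge> 1 - 10 * c / C"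
  define d where "d = c / C"
  have "C > 0" using assms(1,2) by simp
  then have d: "0 < d" "d < 1 / 100" and T: "T < 1 - 10 * d" and c: "c = d * C"
    using assms neg unfolding d_def by (auto simp: field_simps)
  have "(c + C)^3 * (c * (1 - T) + C * T) = C^4 * ((1 + d)^3 * (d + (1 - d) * T))"
    unfolding c by (simp add: algebra_simps eval_nat_numeral)
  then have "1 \<le> (1 + d)^3 * (d + (1 - d) * T)" using assms(3) \<open>C > 0\<close> by simp
  also have "\<dots> \<le> (1 + d)^3 * (d + (1 - d) * (1 - 10 * d))"
    using d T by (intro mult_left_mono add_left_mono) auto
  also have "\<dots> = 1 - 7 * d - 17 * d^2 + d^3 + 20 * d^4 + 10 * d^5"
    by (simp add: algebra_simps eval_nat_numeral)
  also have "\<dots> < 1"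
  proof -
    have d2: "d^2 \<le> d / 100" using mult_left_mono[of d "1/100" d] d by (simp add: power2_eq_square)
    have "d^n \<le> d / 100" if "2 \<le> n" for n
      using power_decreasing[OF that, of d] d d2 by linarith
    from this[of 3] this[of 4] this[of 5] d d2 zero_le_power2[of d] show ?thesis by linarith
  qed
  finally show False by simp
qed

locale correlation_setting = pseudoexpectation U l E + RU_subspace U V'
  for U :: "nat set" and l :: nat and E :: "((nat \<Rightarrow> real) \<Rightarrow> real) \<Rightarrow> real"
    and V' :: "(nat \<Rightarrow> real) set" +
  fixes c C :: real and f0 :: "nat \<Rightarrow> real" and qs :: "((nat \<Rightarrow> real) \<Rightarrow> real) list"
  assumes c_pos: "c > 0"
    and qs_polyfun: "\<forall>q\<in>set qs. \<exists>d. polyfun U d q"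
    and sos_degree_4: "polyfun U 4 (\<lambda>f. \<Sum>q\<leftarrow>qs. (q f)^2)"
    and norm4U_projU: "\<forall>f. (norm4U U (projU U V' f))^4
                          = c^4 * (norm2U U (projU U V' f))^4 - (\<Sum>q\<leftarrow>qs. (q f)^2)"
    and f0_orthogonal: "\<forall>v\<in>V'. ipU U f0 v = 0"
    and norm2U_f0: "norm2U U f0 = 1"
    and norm4U_f0: "norm4U U f0 = C"
    and C_large: "C > 100 * c"
    and level: "l \<ge> 8"
    and E_vanishing_forms: "\<forall>(a::nat \<Rightarrow> real) Q. (\<forall>v\<in>spanF (insert f0 V'). (\<Sum>u\<in>U. a u * v u) = 0) \<longrightarrow>
                              polyfun U (l - 1) Q \<longrightarrow> E (\<lambda>f. (\<Sum>u\<in>U. a u * f u) * Q f) = 0"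
    and E_unit_norm: "\<forall>Q. polyfun U (l - 2) Q \<longrightarrow> E (\<lambda>f. ((norm2U U f)^2 - 1) * Q f) = 0"
    and E_norm4U: "E (\<lambda>f. (norm4U U f)^4) \<ge> C^4"
begin

definition corr :: "(nat \<Rightarrow> real) \<Rightarrow> real" where
  "corr f = ipU U f f0"

text \<open>As \<open>f0 \<bottom> V'\<close> is a unit vector, this is the orthogonal projection onto
  \<open>V = span (V' \<union> {f0})\<close>.\<close>
definition projV :: "(nat \<Rightarrow> real) \<Rightarrow> nat \<Rightarrow> real" where
  "projV f u = projU U V' f u + corr f * f0 u"

definition normsq_projU :: "(nat \<Rightarrow> real) \<Rightarrow> real" where
  "normsq_projU f = (norm2U U (projU U V' f))^2"

lemma card_U_pos: "real (card U) > 0"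
proof (rule ccontr)
  assume "\<not> real (card U) > 0"
  then have "norm2U U f0 = 0" by (simp add: norm2U_def)
  then show False using norm2U_f0 by simp
qed

lemma corr_linear: "corr f = (\<Sum>v\<in>U. (f0 v / real (card U)) * f v)"
  unfolding corr_def ipU_def by (simp add: sum_divide_distrib mult.commute)

lemma projV_linear: "\<exists>a. \<forall>f. projV f u = (\<Sum>v\<in>U. a v * f v)"
proof -
  define a where "a v = projU U V' (\<lambda>w. if w = v then 1 else 0) u + f0 v / real (card U) * f0 u" for v
  have "projV f u = (\<Sum>v\<in>U. a v * f v)" for f
    unfolding projV_def a_def corr_linear projU_matrix[of f u]
    by (simp add: algebra_simps sum.distrib sum_distrib_left sum_distrib_right)
  then show ?thesis by blast
qed

lemma polyfun_projV: "polyfun U 1 (\<lambda>f. projV f u)"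
proof -
  obtain a where "\<And>f. projV f u = (\<Sum>v\<in>U. a v * f v)" using projV_linear by blast
  then show ?thesis using polyfun_linear_form[OF finite_U, of a] by simp
qed

lemma polyfun_projU: "polyfun U 1 (\<lambda>f. projU U V' f u)"
  by (subst projU_matrix) (rule polyfun_linear_form[OF finite_U])

lemma polyfun_corr: "polyfun U 1 corr"
  unfolding corr_linear by (rule polyfun_linear_form[OF finite_U])

lemma corr_f0: "corr f0 = 1"
  using norm2U_f0 norm2U_power2[of U f0] unfolding corr_def ipU_def by (simp add: power2_eq_square)

lemma corr_V': "v \<in> V' \<Longrightarrow> corr v = 0"
  using f0_orthogonal ipU_commute[of U v f0] unfolding corr_def by simp

lemma projV_generators: "x \<in> insert f0 V' \<Longrightarrow> projV x = x"
  using projU_id projU_eq_0[OF f0_orthogonal] corr_f0 corr_V' by (auto simp: projV_def)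

lemma E_coordinate_residual:
  assumes "u \<in> U" "polyfun U (l - 1) Q"
  shows "E (\<lambda>f. (f u - projV f u) * Q f) = 0"
proof -
  obtain a where a: "\<And>f. projV f u = (\<Sum>v\<in>U. a v * f v)" using projV_linear by blast
  define b where "b v = (if v = u then 1 else 0) - a v" for v
  have residual: "(\<Sum>v\<in>U. b v * f v) = f u - projV f u" for f
  proof -
    have "(\<Sum>v\<in>U. (if v = u then 1 else 0) * f v) = (\<Sum>v\<in>U. if v = u then f v else 0)"
      by (rule sum.cong) auto
    then have "(\<Sum>v\<in>U. (if v = u then 1 else 0) * f v) = f u"
      using finite_U assms(1) by simp
    then show ?thesis unfolding b_def a by (simp add: left_diff_distrib sum_subtractf)
  qed
  have "(\<Sum>v\<in>U. b v * y v) = 0" if "y \<in> insert f0 V'" for y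
    using residual[of y] projV_generators[OF that] by simp
  then have "(\<Sum>v\<in>U. b v * x v) = 0" if "x \<in> spanF (insert f0 V')" for x
    using linear_form_vanishes_on_spanF that by blast
  then have "E (\<lambda>f. (\<Sum>v\<in>U. b v * f v) * Q f) = 0"
    using E_vanishing_forms assms(2) by blast
  then show ?thesis by (simp only: residual)
qed

lemma polyfun_residual:
  assumes "u \<in> U" "polyfun U (l - 1) Q"
  shows "polyfun U l (\<lambda>f. (f u - projV f u) * Q f)"
  using level assms(2)
  by (intro polyfun_mult_le[of U 1 _ "l - 1"] polyfun_diff polyfun_coordinate[OF finite_U assms(1)]
      polyfun_projV) auto

lemma E_eq_modulo_residuals:
  assumes "\<And>f. F f = G f + (\<Sum>u\<in>U. (f u - projV f u) * Q u f)"
    and "polyfun U l G" and "\<And>u. u \<in> U \<Longrightarrow> polyfun U (l - 1) (Q u)"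
  shows "E F = E G"
proof -
  have "F = (\<lambda>f. G f + (\<Sum>u\<in>U. (f u - projV f u) * Q u f))"
    using assms(1) by (rule ext)
  then have "E F = E G + E (\<lambda>f. \<Sum>u\<in>U. (f u - projV f u) * Q u f)"
    using assms(2,3) by (simp add: E_add polyfun_sum[OF finite_U] polyfun_residual)
  also have "E (\<lambda>f. \<Sum>u\<in>U. (f u - projV f u) * Q u f) = 0"
    using assms(3) by (simp add: E_sum[OF finite_U] polyfun_residual E_coordinate_residual)
  finally show ?thesis by simp
qed

lemma E_norm4U_projV: "E (\<lambda>f. (norm4U U f)^4) = E (\<lambda>f. (norm4U U (projV f))^4)"
proof -
  define Q where "Q u f = (1 / real (card U)) *
      ((f u)^3 + (f u)^2 * projV f u + f u * (projV f u)^2 + (projV f u)^3)" for u f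
  have factor: "x^4 = y^4 + (x - y) * (x^3 + x^2 * y + x * y^2 + y^3)" for x y :: real
    by (simp add: algebra_simps eval_nat_numeral)
  have termwise: "(\<Sum>u\<in>U. (f u)^4)
      = (\<Sum>u\<in>U. (projV f u)^4 + real (card U) * ((f u - projV f u) * Q u f))" for f
  proof (rule sum.cong[OF refl])
    fix u
    show "(f u)^4 = (projV f u)^4 + real (card U) * ((f u - projV f u) * Q u f)"
      using card_U_pos by (subst factor[of "f u" "projV f u"]) (simp add: Q_def)
  qed
  have split: "(norm4U U f)^4 = (norm4U U (projV f))^4 + (\<Sum>u\<in>U. (f u - projV f u) * Q u f)" for f
  proof -
    have "(\<Sum>u\<in>U. (f u)^4) = (\<Sum>u\<in>U. (projV f u)^4) + real (card U) * (\<Sum>u\<in>U. (f u - projV f u) * Q u f)"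
      using termwise[of f] by (simp add: sum.distrib sum_distrib_left)
    then show ?thesis using card_U_pos by (simp add: norm4U_power4 add_divide_distrib)
  qed
  have "polyfun U (l - 1) (Q u)" if "u \<in> U" for u
  proof -
    note x = polyfun_coordinate[OF finite_U that] and y = polyfun_projV[of u]
    have "polyfun U 3 (Q u)"
      unfolding Q_def
      by (intro polyfun_cmult polyfun_add polyfun_power_le[OF x] polyfun_power_le[OF y]
          polyfun_mult_le[OF polyfun_power[OF x] y] polyfun_mult_le[OF x polyfun_power[OF y]]) simp_all
    then show ?thesis by (rule polyfun_mono) (use level in simp)
  qed
  moreover have "polyfun U l (\<lambda>f. (norm4U U (projV f))^4)"
    by (rule polyfun_mono[OF polyfun_norm4U_power4[OF polyfun_projV finite_U]]) (use level in simp)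
  ultimately show ?thesis using split by (intro E_eq_modulo_residuals)
qed

lemma projU_orthogonal_f0: "(\<Sum>u\<in>U. projU U V' f u * f0 u) = 0"
  using f0_orthogonal projU_orthogonal[of f] card_U_pos by (auto simp: ipU_def mult.commute)

lemma norm2U_projV: "(norm2U U (projV f))^2 = normsq_projU f + (corr f)^2"
proof -
  have "(\<Sum>u\<in>U. (projV f u)^2) = (\<Sum>u\<in>U. (projU U V' f u)^2)
      + 2 * corr f * (\<Sum>u\<in>U. projU U V' f u * f0 u) + (corr f)^2 * (\<Sum>u\<in>U. (f0 u)^2)"
    unfolding projV_def by (simp add: power2_eq_square algebra_simps sum.distrib sum_distrib_left)
  moreover have "(\<Sum>u\<in>U. (f0 u)^2) = real (card U)"
    using norm2U_f0 norm2U_power2[of U f0] card_U_pos by simp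
  ultimately show ?thesis
    using card_U_pos by (simp add: normsq_projU_def norm2U_power2 projU_orthogonal_f0 add_divide_distrib)
qed

lemma E_unit_norm_projV:
  assumes "polyfun U (l - 2) Q"
  shows "E (\<lambda>f. ((norm2U U (projV f))^2 - 1) * Q f) = 0"
proof -
  define R where "R u f = (1 / real (card U)) * ((f u + projV f u) * Q f)" for u f
  have split: "((norm2U U f)^2 - 1) * Q f
      = ((norm2U U (projV f))^2 - 1) * Q f + (\<Sum>u\<in>U. (f u - projV f u) * R u f)" for f
  proof -
    define D where "D = (\<Sum>u\<in>U. (f u - projV f u) * (f u + projV f u))"
    have "(\<Sum>u\<in>U. (f u)^2) = (\<Sum>u\<in>U. (projV f u)^2 + (f u - projV f u) * (f u + projV f u))"
      by (intro sum.cong) (simp_all add: power2_eq_square algebra_simps)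
    then have S1: "(\<Sum>u\<in>U. (f u)^2) = (\<Sum>u\<in>U. (projV f u)^2) + D"
      unfolding D_def by (simp add: sum.distrib)
    have S2: "(\<Sum>u\<in>U. (f u - projV f u) * R u f) = D * Q f / real (card U)"
      unfolding R_def D_def by (simp add: sum_distrib_left sum_divide_distrib mult_ac)
    show ?thesis
      unfolding norm2U_power2 S1 S2 by (simp add: add_divide_distrib algebra_simps)
  qed
  have "polyfun U (l - 1) (R u)" if "u \<in> U" for u
    unfolding R_def using level
    by (intro polyfun_cmult polyfun_mult_le[OF polyfun_add[OF polyfun_coordinate[OF finite_U that]
          polyfun_projV] assms]) simp
  moreover have "polyfun U l (\<lambda>f. ((norm2U U (projV f))^2 - 1) * Q f)"
    using level by (intro polyfun_mult_le[OF polyfun_diff[OF polyfun_norm2U_power2[OF polyfun_projV finite_U]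
          polyfun_const] assms]) simp
  ultimately have "E (\<lambda>f. ((norm2U U f)^2 - 1) * Q f) = E (\<lambda>f. ((norm2U U (projV f))^2 - 1) * Q f)"
    using split by (intro E_eq_modulo_residuals)
  then show ?thesis using E_unit_norm assms by simp
qed

lemma norm4U_projV_sos:
  assumes "e > 0"
  shows "\<exists>R. sos_polyfun U 2 R \<and> (\<forall>f. (norm4U U (projV f))^4 + R f
      = (1 + e)^3 * (norm4U U (projU U V' f))^4 + (1 + 1/e)^3 * C^4 * (corr f)^4)"
proof -
  define x where "x u f = projU U V' f u" for u f
  define y where "y u f = corr f * f0 u" for u f
  define r where "r u f = (1 + e)^2 / e * (e * (x u f)^2 - (1 / e) * (y u f)^2)^2
      + 1 / e^2 * ((e * x u f - y u f)^2)^2 + 2 / e * ((x u f + y u f) * (e * x u f - y u f))^2" for u f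
  define R where "R f = (\<Sum>u\<in>U. (1 / real (card U)) * r u f)" for f
  have px: "polyfun U 1 (x u)" for u
    unfolding x_def by (rule polyfun_projU)
  have py: "polyfun U 1 (y u)" for u
    unfolding y_def using polyfun_cmult[OF polyfun_corr, of "f0 u"] by (simp add: mult.commute)
  have "sos_polyfun U 2 R"
    unfolding R_def r_def using assms
    by (intro sos_polyfun_sum[OF finite_U] sos_polyfun_cmult sos_polyfun_add sos_polyfun_square
        polyfun_diff polyfun_cmult polyfun_power_le[OF px] polyfun_power_le[OF py]
        polyfun_power_le[OF polyfun_diff[OF polyfun_cmult[OF px] py]]
        polyfun_mult_le[OF polyfun_add[OF px py] polyfun_diff[OF polyfun_cmult[OF px] py]]) simp_all
  moreover have "(norm4U U (projV f))^4 + R f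
      = (1 + e)^3 * (norm4U U (projU U V' f))^4 + (1 + 1/e)^3 * C^4 * (corr f)^4" for f
  proof -
    have "(x u f + y u f)^4 + r u f = (1 + e)^3 * (x u f)^4 + (1 + 1/e)^3 * (y u f)^4" for u
      using power4_add_sos[OF assms, of "x u f" "y u f"] unfolding r_def by linarith
    then have "(\<Sum>u\<in>U. (projV f u)^4) + (\<Sum>u\<in>U. r u f)
        = (1 + e)^3 * (\<Sum>u\<in>U. (x u f)^4) + (1 + 1/e)^3 * (\<Sum>u\<in>U. (y u f)^4)"
      by (simp add: projV_def x_def y_def sum_distrib_left flip: sum.distrib)
    moreover have "(\<Sum>u\<in>U. (y u f)^4) = (corr f)^4 * (\<Sum>u\<in>U. (f0 u)^4)"
      by (simp add: y_def power_mult_distrib sum_distrib_left)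
    moreover have "(\<Sum>u\<in>U. (f0 u)^4) = C^4 * real (card U)"
      using norm4U_f0 norm4U_power4[of U f0] card_U_pos by (simp add: field_simps)
    ultimately show ?thesis
      using card_U_pos
      by (simp add: R_def norm4U_power4 x_def add_divide_distrib flip: sum_distrib_left sum_divide_distrib)
        (simp add: field_simps)
  qed
  ultimately show ?thesis by blast
qed

lemma sos_normsq_projU_corr: "sos_polyfun U 2 (\<lambda>f. normsq_projU f * (corr f)^2)"
proof -
  have "normsq_projU f * (corr f)^2 = (\<Sum>u\<in>U. (1 / real (card U)) * (corr f * projU U V' f u)^2)" for f
    unfolding normsq_projU_def norm2U_power2
    by (simp add: power_mult_distrib sum_distrib_left sum_divide_distrib mult_ac)
  moreover have "sos_polyfun U 2 (\<lambda>f. \<Sum>u\<in>U. (1 / real (card U)) * (corr f * projU U V' f u)^2)"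
    by (intro sos_polyfun_sum[OF finite_U] sos_polyfun_cmult sos_polyfun_square
        polyfun_mult_le[OF polyfun_corr polyfun_projU]) simp_all
  ultimately show ?thesis by simp
qed

lemma fourth_moment_certificate:
  assumes "e > 0"
  shows "\<exists>R M. sos_polyfun U 2 R \<and> polyfun U 2 M \<and>
    (\<forall>f. (norm4U U (projV f))^4 + R f
       = (1 + e)^3 * c^4 * 1 + ((1 + 1/e)^3 * C^4 - (1 + e)^3 * c^4) * (corr f)^2
         + ((norm2U U (projV f))^2 - 1) * M f)"
proof -
  define A where "A = (1 + e)^3"
  define B where "B = (1 + 1/e)^3 * C^4"
  obtain R0 where R0: "sos_polyfun U 2 R0"
    "\<And>f. (norm4U U (projV f))^4 + R0 f = A * (norm4U U (projU U V' f))^4 + B * (corr f)^4"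
    using norm4U_projV_sos[OF assms(1)] unfolding A_def B_def by (auto simp: mult.assoc)
  define SQ where "SQ f = (\<Sum>q\<leftarrow>qs. (q f)^2)" for f
  have SQ: "sos_polyfun U 2 SQ"
    unfolding SQ_def using polyfun_sum_squares_summands[OF qs_polyfun, of 2] sos_degree_4 by simp
  have projU4: "(norm4U U (projU U V' f))^4 = c^4 * (normsq_projU f)^2 - SQ f" for f
    using norm4U_projU unfolding normsq_projU_def SQ_def by (simp flip: power_mult)
  define R where "R f = R0 f + A * SQ f + (A * c^4 + B) * (normsq_projU f * (corr f)^2)" for f
  define M where "M f = A * c^4 * normsq_projU f + B * (corr f)^2 + A * c^4" for f
  have "sos_polyfun U 2 R"
    unfolding R_def A_def B_def using R0(1) SQ sos_normsq_projU_corr assms(1)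
    by (intro sos_polyfun_add sos_polyfun_cmult) simp_all
  moreover have "polyfun U 2 M"
    unfolding M_def normsq_projU_def
    by (intro polyfun_add polyfun_cmult polyfun_const polyfun_norm2U_power2[OF polyfun_projU finite_U]
        polyfun_power_le[OF polyfun_corr]) simp
  moreover have "(norm4U U (projV f))^4 + R f
      = A * c^4 * 1 + (B - A * c^4) * (corr f)^2 + ((norm2U U (projV f))^2 - 1) * M f" for f
  proof -
    have "(norm4U U (projV f))^4 = A * (c^4 * (normsq_projU f)^2 - SQ f) + B * (corr f)^4 - R0 f"
      using R0(2)[of f] unfolding projU4 by simp
    then show ?thesis
      unfolding R_def M_def norm2U_projV
      by (simp add: algebra_simps power2_eq_square eval_nat_numeral)
  qed
  ultimately show ?thesis unfolding A_def B_def by blast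
qed

lemma E_fourth_moment_bound:
  "C^4 \<le> (c + C)^3 * (c * (1 - E (\<lambda>f. (corr f)^2)) + C * E (\<lambda>f. (corr f)^2))"
proof -
  define e where "e = C / c"
  have "C > 0" using c_pos C_large by simp
  then have e: "e > 0" "(1 + e) * c = c + C" "(1 + 1/e) * C = c + C"
    unfolding e_def using c_pos by (simp_all add: field_simps)
  define a where "a = (1 + e)^3 * c^4"
  define b where "b = (1 + 1/e)^3 * C^4"
  obtain R M where RM: "sos_polyfun U 2 R" "polyfun U 2 M"
    "\<And>f. (norm4U U (projV f))^4 + R f = a * 1 + (b - a) * (corr f)^2 + ((norm2U U (projV f))^2 - 1) * M f"
    using fourth_moment_certificate[OF e(1)] unfolding a_def b_def by blast
  have E_M: "E (\<lambda>f. ((norm2U U (projV f))^2 - 1) * M f) = 0"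
    using E_unit_norm_projV[OF polyfun_mono[OF RM(2)]] level by simp
  have deg: "polyfun U l (\<lambda>f. (norm4U U (projV f))^4)" "polyfun U l R" "polyfun U l (\<lambda>f. 1)"
    "polyfun U l (\<lambda>f. (corr f)^2)" "polyfun U l (\<lambda>f. ((norm2U U (projV f))^2 - 1) * M f)"
    using level
    by (auto intro: polyfun_mono[OF polyfun_norm4U_power4[OF polyfun_projV finite_U]]
        polyfun_mono[OF polyfun_sos_polyfun[OF RM(1)]] polyfun_const polyfun_power_le[OF polyfun_corr]
        polyfun_mult_le[OF polyfun_diff[OF polyfun_norm2U_power2[OF polyfun_projV finite_U] polyfun_const] RM(2)])
  have "C^4 \<le> E (\<lambda>f. (norm4U U (projV f))^4)"
    using E_norm4U E_norm4U_projV by simp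
  also have "\<dots> \<le> E (\<lambda>f. (norm4U U (projV f))^4 + R f)"
    using E_sos_nonneg[OF sos_polyfun_mono[OF RM(1)]] level by (simp add: E_add deg)
  also have "\<dots> = E (\<lambda>f. (a * 1 + (b - a) * (corr f)^2) + ((norm2U U (projV f))^2 - 1) * M f)"
    using RM(3) by simp
  also have "\<dots> = a * E (\<lambda>f. 1) + (b - a) * E (\<lambda>f. (corr f)^2)"
    using E_add[OF polyfun_lincomb[OF deg(3,4)] deg(5)] E_lincomb[OF deg(3,4)] E_M by simp
  also have "\<dots> = a * (1 - E (\<lambda>f. (corr f)^2)) + b * E (\<lambda>f. (corr f)^2)"
    using E_const[of 1] by (simp add: algebra_simps)
  also have "\<dots> = (c + C)^3 * (c * (1 - E (\<lambda>f. (corr f)^2)) + C * E (\<lambda>f. (corr f)^2))"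
  proof -
    have "a = ((1 + e) * c)^3 * c" "b = ((1 + 1/e) * C)^3 * C"
      unfolding a_def b_def by (simp_all add: power_mult_distrib eval_nat_numeral)
    then show ?thesis unfolding e(2,3) by (simp add: algebra_simps)
  qed
  finally show ?thesis .
qed

lemma E_ipU_f0_squared_lower_bound: "E (\<lambda>f. (ipU U f f0)^2) \<ge> 1 - 10 * c / C"
  using correlation_from_fourth_moment[OF c_pos C_large E_fourth_moment_bound] unfolding corr_def .

end

theorem lemma5p6:
  "\<exists>K::real. K > 0 \<and>
    (\<forall>(U::nat set) (V'::(nat \<Rightarrow> real) set) (c::real) (f0::nat \<Rightarrow> real) (C::real)
       (l::nat) (E::((nat \<Rightarrow> real) \<Rightarrow> real) \<Rightarrow> real).
      finite U \<longrightarrow>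
      V' \<subseteq> RU U \<longrightarrow> subspaceF V' \<longrightarrow>
      c > 0 \<longrightarrow>
      (\<exists>qs::((nat \<Rightarrow> real) \<Rightarrow> real) list.
          (\<forall>q\<in>set qs. \<exists>d. polyfun U d q) \<and>
          polyfun U 4 (\<lambda>f. \<Sum>q\<leftarrow>qs. (q f)^2) \<and>
          (\<forall>f. (norm4U U (projU U V' f))^4
                 = c^4 * (norm2U U (projU U V' f))^4 - (\<Sum>q\<leftarrow>qs. (q f)^2))) \<longrightarrow>
      f0 \<in> RU U \<longrightarrow> (\<forall>v\<in>V'. ipU U f0 v = 0) \<longrightarrow>
      norm2U U f0 = 1 \<longrightarrow> norm4U U f0 = C \<longrightarrow> C > 100 * c \<longrightarrow>
      l \<ge> 8 \<longrightarrow> pseudoexp U l E \<longrightarrow>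
      (\<forall>(a::nat \<Rightarrow> real) Q. (\<forall>v\<in>spanF (insert f0 V'). (\<Sum>u\<in>U. a u * v u) = 0) \<longrightarrow>
           polyfun U (l - 1) Q \<longrightarrow> E (\<lambda>f. (\<Sum>u\<in>U. a u * f u) * Q f) = 0) \<longrightarrow>
      (\<forall>Q. polyfun U (l - 2) Q \<longrightarrow> E (\<lambda>f. ((norm2U U f)^2 - 1) * Q f) = 0) \<longrightarrow>
      E (\<lambda>f. (norm4U U f)^4) \<ge> C^4 \<longrightarrow>
      E (\<lambda>f. (ipU U f f0)^2) \<ge> 1 - K * c / C)"
  by (intro exI[of _ 10])
    (auto intro!: correlation_setting.E_ipU_f0_squared_lower_bound
      simp: correlation_setting_def correlation_setting_axioms_def pseudoexpectation_def RU_subspace_def)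

end
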